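(* Let $\Sigma$ be an alphabet with $|\Sigma|=3$. There exists an infinite word over $\Sigma$ that is pseudo-square-free with respect to the mirror image $\operatorname{Mir}$, and for every antimorphic involution $\theta\neq\operatorname{Mir}$ on $\Sigma^*$ there is no infinite word over $\Sigma$ that is pseudo-square-free with respect to $\theta$.
   Context: A function $\theta:\Sigma^*\to\Sigma^*$ is an antimorphic involution if $\theta(uv)=\theta(v)\theta(u)$ and $\theta(\theta(w))=w$ for all words $u,v,w$. The mirror image is $\operatorname{Mir}(b_1\cdots b_n)=b_n\cdots b_1$. A pseudo square with respect to $\theta$ is a nonempty word $u_1u_2$ with $u_1=u_2$ or $u_1=\theta(u_2)$. A word is pseudo-square-free with respect to $\theta$ if no factor (contiguous subword) of it is a pseudo square with respect to $\theta$. *)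

theory Defs
  imports Main
begin

definition antimorphic_involution :: "('a list \<Rightarrow> 'a list) \<Rightarrow> bool" where
  "antimorphic_involution \<theta> \<longleftrightarrow>
     (\<forall>u v. \<theta> (u @ v) = \<theta> v @ \<theta> u) \<and> (\<forall>w. \<theta> (\<theta> w) = w)"

text \<open>Mirror image is rev.\<close>

definition pseudo_square :: "('a list \<Rightarrow> 'a list) \<Rightarrow> 'a list \<Rightarrow> bool" where
  "pseudo_square \<theta> x \<longleftrightarrow>
     x \<noteq> [] \<and> (\<exists>u1 u2. x = u1 @ u2 \<and> (u1 = u2 \<or> u1 = \<theta> u2))"

definition inf_factor :: "(nat \<Rightarrow> 'a) \<Rightarrow> 'a list \<Rightarrow> bool" where
  "inf_factor w x \<longleftrightarrow> (\<exists>i. x = map w [i..<i + length x])"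

definition inf_pseudo_square_free :: "('a list \<Rightarrow> 'a list) \<Rightarrow> (nat \<Rightarrow> 'a) \<Rightarrow> bool" where
  "inf_pseudo_square_free \<theta> w \<longleftrightarrow> (\<forall>x. inf_factor w x \<longrightarrow> \<not> pseudo_square \<theta> x)"

end

theory Submission
  imports Defs
begin

text \<open>
  A mirror pseudo-square \<open>rev v @ y # y # v\<close> contains the square \<open>y y\<close> at its centre, so avoiding
  \<open>rev\<close>-pseudo-squares is the same as avoiding squares. A square-free ternary word is obtained by
  recording at each position whether the Thue--Morse word \<open>t\<close> changes there and, if it does, its
  value: a square in this word lifts to an overlap in \<open>t\<close>, and \<open>t\<close> is overlap-free.

  Any other antimorphic involution is \<open>rev \<circ> map \<sigma>\<close> for a letter involution \<open>\<sigma>\<close> swapping two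
  letters \<open>a\<close>, \<open>b\<close>. In a word avoiding its pseudo-squares adjacent letters are neither equal nor
  swapped by \<open>\<sigma>\<close>, so the third letter \<open>c\<close> occurs at every second position; avoiding squares of
  period 2 then makes the letters between the \<open>c\<close>'s alternate between \<open>a\<close> and \<open>b\<close>, which is a
  square of period 4.
\<close>

section \<open>Squares in infinite words\<close>

definition inf_square_free :: "(nat \<Rightarrow> 'a) \<Rightarrow> bool" where
  "inf_square_free w \<longleftrightarrow> (\<forall>i p. 0 < p \<longrightarrow> (\<exists>k<p. w (i + k) \<noteq> w (i + p + k)))"

lemma inf_square_freeD: "inf_square_free w \<Longrightarrow> 0 < p \<Longrightarrow> \<exists>k<p. w (i + k) \<noteq> w (i + p + k)"
  unfolding inf_square_free_def by blast

lemma inf_square_free_shift: "inf_square_free w \<Longrightarrow> inf_square_free (\<lambda>n. w (i + n))"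
  unfolding inf_square_free_def by (metis add.assoc)

lemma inf_factor_map_upt: "inf_factor w (map w [i..<j])"
  unfolding inf_factor_def by (rule exI[of _ i]) (cases "i \<le> j"; simp)

lemma inf_factor_appendD:
  assumes "inf_factor w (u @ v)"
  shows "inf_factor w u" "inf_factor w v"
proof -
  define m n where "m = length u" and "n = length v"
  then have len: "length u = m" "length v = n" by simp_all
  obtain i where "u @ v = map w [i..<i + m + n]"
    using assms unfolding inf_factor_def by (metis add.assoc len length_append)
  also have "\<dots> = map w [i..<i + m] @ map w [i + m..<i + m + n]"
    by (simp add: upt_add_eq_append[of i "i + m" n])
  finally have "u = map w [i..<i + m]" "v = map w [i + m..<i + m + n]"
    by (simp_all add: append_eq_append_conv len)
  then show "inf_factor w u" "inf_factor w v"
    by (simp_all add: inf_factor_map_upt)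
qed

lemma inf_factor_square_iff:
  "inf_factor w (u @ u) \<longleftrightarrow>
     (\<exists>i. u = map w [i..<i + length u] \<and> (\<forall>k<length u. w (i + k) = w (i + length u + k)))"
proof -
  define n where "n = length u"
  then have len: "length u = n" by simp
  have split: "map w [i..<i + n + n] = map w [i..<i + n] @ map w [i + n..<i + n + n]" for i
    by (simp add: upt_add_eq_append[of i "i + n" n])
  have "inf_factor w (u @ u) \<longleftrightarrow> (\<exists>i. u @ u = map w [i..<i + n + n])"
    unfolding inf_factor_def by (simp add: len add.assoc)
  also have "\<dots> \<longleftrightarrow> (\<exists>i. u = map w [i..<i + n] \<and> map w [i..<i + n] = map w [i + n..<i + n + n])"
    unfolding split by (auto simp: append_eq_append_conv len)
  also have "\<dots> \<longleftrightarrow> (\<exists>i. u = map w [i..<i + n] \<and> (\<forall>k<n. w (i + k) = w (i + n + k)))"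
    by (simp add: list_eq_iff_nth_eq)
  finally show ?thesis unfolding n_def .
qed

lemma inf_square_free_iff:
  fixes w :: "nat \<Rightarrow> 'a"
  shows "inf_square_free w \<longleftrightarrow> (\<forall>u. u \<noteq> [] \<longrightarrow> \<not> inf_factor w (u @ u))"
  unfolding inf_square_free_def inf_factor_square_iff
proof (intro iffI allI impI notI)
  fix u :: "'a list" assume free: "\<forall>i p. 0 < p \<longrightarrow> (\<exists>k<p. w (i + k) \<noteq> w (i + p + k))" and "u \<noteq> []"
  assume "\<exists>i. u = map w [i..<i + length u] \<and> (\<forall>k<length u. w (i + k) = w (i + length u + k))"
  then obtain i where "\<forall>k<length u. w (i + k) = w (i + length u + k)" by blast
  with free[rule_format, of "length u" i] \<open>u \<noteq> []\<close> show False by auto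
next
  fix i p :: nat assume "0 < p"
  assume no_square: "\<forall>u. u \<noteq> [] \<longrightarrow>
    \<not> (\<exists>i. u = map w [i..<i + length u] \<and> (\<forall>k<length u. w (i + k) = w (i + length u + k)))"
  show "\<exists>k<p. w (i + k) \<noteq> w (i + p + k)"
    using no_square[rule_format, of "map w [i..<i + p]"] \<open>0 < p\<close> by auto
qed

lemma inf_pseudo_square_free_imp_square_free:
  "inf_pseudo_square_free \<theta> w \<Longrightarrow> inf_square_free w"
  unfolding inf_square_free_iff inf_pseudo_square_free_def pseudo_square_def by blast

lemma inf_pseudo_square_free_rev_iff: "inf_pseudo_square_free rev w \<longleftrightarrow> inf_square_free w"
proof
  assume "inf_square_free w"
  then have no_square: "\<not> inf_factor w (u @ u)" if "u \<noteq> []" for u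
    using that unfolding inf_square_free_iff by blast
  show "inf_pseudo_square_free rev w"
    unfolding inf_pseudo_square_free_def pseudo_square_def
  proof (intro allI impI notI, elim conjE exE disjE)
    fix x u1 u2
    assume "inf_factor w x" "x \<noteq> []" "x = u1 @ u2"
    then show "u1 = u2 \<Longrightarrow> False" using no_square by auto
    assume "u1 = rev u2"
    with \<open>x \<noteq> []\<close> \<open>x = u1 @ u2\<close> obtain y ys where x: "x = rev ys @ ([y] @ [y]) @ ys"
      by (cases u2) auto
    from \<open>inf_factor w x\<close> have "inf_factor w (([y] @ [y]) @ ys)"
      unfolding x by (rule inf_factor_appendD(2))
    then have "inf_factor w ([y] @ [y])"
      by (rule inf_factor_appendD(1))
    with no_square[of "[y]"] show False by simp
  qed
qed (rule inf_pseudo_square_free_imp_square_free)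

lemma inf_square_free_comp: "inj f \<Longrightarrow> inf_square_free w \<Longrightarrow> inf_square_free (f \<circ> w)"
  unfolding inf_square_free_def by (simp add: inj_eq)

lemma bool_seq_constant: "\<forall>k<(p::nat). f (i + k) = f (i + k + 1) \<Longrightarrow> f (i + p) = f i"
  by (induction p) auto

lemma bool_seq_alternating: "\<forall>k<(p::nat). f (i + k) \<noteq> f (i + k + 1) \<Longrightarrow> f (i + p) = (f i \<noteq> odd p)"
  by (induction p) auto

section \<open>The Thue--Morse word\<close>

fun tm :: "nat \<Rightarrow> bool" where
  "tm n = (if n = 0 then False else if even n then tm (n div 2) else \<not> tm (n div 2))"

declare tm.simps[simp del]

lemma tm_0: "\<not> tm 0"
  by (simp add: tm.simps)

lemma tm_double_plus: "r < 2 \<Longrightarrow> tm (2 * n + r) = (tm n \<noteq> odd r)"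
  by (subst tm.simps) (auto simp: less_2_cases_iff tm_0)

lemma tm_eq_Suc_imp_odd: "tm n = tm (Suc n) \<Longrightarrow> odd n"
  using tm_double_plus[of 0 "n div 2"] tm_double_plus[of 1 "n div 2"] by (auto elim: evenE)

text \<open>Equal neighbours occur in \<open>tm\<close> only at odd positions, and an odd shift cannot preserve that;
  without equal neighbours the window alternates over an odd length, so its ends differ.\<close>

lemma tm_odd_overlap_free:
  assumes "odd p" and overlap: "\<forall>k\<le>p. tm (i + k + p) = tm (i + k)"
  shows False
proof (cases "\<exists>k<p. tm (i + k) = tm (i + k + 1)")
  case True
  then obtain k where "k < p" and eq: "tm (i + k) = tm (i + k + 1)" by blast
  with overlap have shifted: "tm (i + k + p) = tm (i + k + p + 1)"
    using overlap[rule_format, of k] overlap[rule_format, of "k + 1"] by (simp add: add_ac)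
  from eq have "odd (i + k)" by (intro tm_eq_Suc_imp_odd) simp
  moreover from shifted have "odd (i + k + p)" by (intro tm_eq_Suc_imp_odd) simp
  ultimately show False using \<open>odd p\<close> by simp
next
  case False
  then have "tm (i + p) \<noteq> tm i"
    using bool_seq_alternating[of p tm i] \<open>odd p\<close> by auto
  with overlap[rule_format, of 0] show False by simp
qed

lemma tm_even_overlap_half:
  assumes "\<forall>k\<le>2 * q. tm (i + k + 2 * q) = tm (i + k)"
  shows "\<forall>k\<le>q. tm (i div 2 + k + q) = tm (i div 2 + k)"
proof (intro allI impI)
  fix k assume "k \<le> q"
  define h r where "h = i div 2" and "r = i mod 2"
  then have "r < 2" and i: "i = 2 * h + r" by simp_all
  have "tm (2 * (h + k + q) + r) = tm (i + 2 * k + 2 * q)"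
    by (rule arg_cong[where f = tm]) (simp add: i)
  also from \<open>k \<le> q\<close> assms have "\<dots> = tm (i + 2 * k)" by simp
  also have "\<dots> = tm (2 * (h + k) + r)"
    by (rule arg_cong[where f = tm]) (simp add: i)
  finally have "tm (2 * (h + k + q) + r) = tm (2 * (h + k) + r)" .
  with tm_double_plus[OF \<open>r < 2\<close>, of "h + k + q"] tm_double_plus[OF \<open>r < 2\<close>, of "h + k"]
  show "tm (i div 2 + k + q) = tm (i div 2 + k)"
    unfolding h_def[symmetric] by (simp; blast)
qed

lemma tm_overlap_free: "0 < p \<Longrightarrow> \<not> (\<forall>k\<le>p. tm (i + k + p) = tm (i + k))"
proof (induction p arbitrary: i rule: less_induct)
  case (less p)
  show ?case
  proof (cases "even p")
    case True
    then obtain q where "p = 2 * q" by blast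
    with less.prems have "q < p" "0 < q" by auto
    with \<open>p = 2 * q\<close> show ?thesis
      using less.IH tm_even_overlap_half by blast
  qed (use tm_odd_overlap_free in blast)
qed

definition tm_diff :: "nat \<Rightarrow> bool option" where
  "tm_diff n = (if tm n = tm (Suc n) then None else Some (tm n))"

lemma tm_diff_eq_imp_same_change:
  "tm_diff n = tm_diff m \<Longrightarrow> (tm n = tm m) = (tm (Suc n) = tm (Suc m))"
  unfolding tm_diff_def by (auto split: if_splits)

lemma tm_diff_eq_imp_no_change:
  "tm_diff n = tm_diff m \<Longrightarrow> tm n \<noteq> tm m \<Longrightarrow> tm n = tm (Suc n)"
  unfolding tm_diff_def by (auto split: if_splits)

lemma inf_square_free_tm_diff: "inf_square_free tm_diff"
  unfolding inf_square_free_def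
proof (intro allI impI, rule ccontr)
  fix i p :: nat
  assume "0 < p" "\<not> (\<exists>k<p. tm_diff (i + k) \<noteq> tm_diff (i + p + k))"
  then have square: "tm_diff (i + k) = tm_diff (i + p + k)" if "k < p" for k
    using that by blast
  have step: "(tm (i + k) = tm (i + k + p)) = (tm (i + k + 1) = tm (i + k + 1 + p))" if "k < p" for k
    using tm_diff_eq_imp_same_change[OF square[OF that]] by (simp add: add_ac)
  have agree: "(tm (i + k) = tm (i + k + p)) = (tm i = tm (i + p))" if "k \<le> p" for k
  proof -
    have "\<forall>j<k. (tm (i + j) = tm (i + j + p)) = (tm (i + j + 1) = tm (i + j + 1 + p))"
      using that step by (meson less_le_trans)
    then show ?thesis
      using bool_seq_constant[of k "\<lambda>n. tm n = tm (n + p)" i] by simp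
  qed
  \<comment> \<open>Either the two copies of \<open>tm\<close> agree on the whole window, an overlap, or they disagree
    everywhere, which forces \<open>tm\<close> to be constant on it.\<close>
  show False
  proof (cases "tm i = tm (i + p)")
    case True
    then have "\<forall>k\<le>p. tm (i + k + p) = tm (i + k)"
      using agree by simp
    with tm_overlap_free \<open>0 < p\<close> show False by blast
  next
    case False
    have "tm (i + k) = tm (i + k + 1)" if "k < p" for k
    proof -
      from that False agree have "tm (i + k) \<noteq> tm (i + k + p)" by simp
      with tm_diff_eq_imp_no_change[OF square[OF that]] show ?thesis by (simp add: add_ac)
    qed
    with False show False
      using bool_seq_constant[of p tm i] by simp
  qed
qed

section \<open>Antimorphic involutions over three letters\<close>

lemma antimorphic_involution_Nil: "antimorphic_involution \<theta> \<Longrightarrow> \<theta> [] = []"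
  unfolding antimorphic_involution_def by (metis append_Nil append_self_conv2 self_append_conv)

lemma antimorphic_involution_Cons:
  "antimorphic_involution \<theta> \<Longrightarrow> \<theta> (a # xs) = \<theta> xs @ \<theta> [a]"
  unfolding antimorphic_involution_def by (metis append_Cons append_Nil)

lemma antimorphic_involution_involutive: "antimorphic_involution \<theta> \<Longrightarrow> \<theta> (\<theta> xs) = xs"
  unfolding antimorphic_involution_def by blast

lemma antimorphic_involution_length_le:
  assumes "antimorphic_involution \<theta>"
  shows "length xs \<le> length (\<theta> xs)"
proof (induction xs)
  case (Cons a xs)
  have "\<theta> [a] \<noteq> []"
    using antimorphic_involution_involutive[OF assms, of "[a]"] antimorphic_involution_Nil[OF assms]
    by auto
  then have "1 \<le> length (\<theta> [a])" by (cases "\<theta> [a]") simp_all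
  with Cons.IH show ?case
    by (simp add: antimorphic_involution_Cons[OF assms, of a xs])
qed simp

lemma antimorphic_involution_rev_map:
  assumes "antimorphic_involution \<theta>"
  obtains \<sigma> where "\<And>xs. \<theta> xs = rev (map \<sigma> xs)" and "\<And>a. \<sigma> (\<sigma> a) = a"
proof -
  define \<sigma> where "\<sigma> a = hd (\<theta> [a])" for a
  note inv = antimorphic_involution_involutive[OF assms]
  \<comment> \<open>A length-nondecreasing involution preserves lengths, so letters go to letters.\<close>
  have single: "\<theta> [a] = [\<sigma> a]" for a
  proof -
    have "length (\<theta> [a]) \<le> 1"
      using antimorphic_involution_length_le[OF assms, of "\<theta> [a]"] by (simp add: inv)
    moreover have "1 \<le> length (\<theta> [a])"
      using antimorphic_involution_length_le[OF assms, of "[a]"] by simp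
    ultimately show ?thesis unfolding \<sigma>_def by (cases "\<theta> [a]") auto
  qed
  have rev_map: "\<theta> xs = rev (map \<sigma> xs)" for xs
  proof (induction xs)
    case (Cons a xs)
    then show ?case by (simp add: antimorphic_involution_Cons[OF assms, of a xs] single)
  qed (simp add: antimorphic_involution_Nil[OF assms])
  show thesis
  proof (rule that[OF rev_map])
    show "\<sigma> (\<sigma> a) = a" for a
      using inv[of "[a]"] by (simp add: single)
  qed
qed

lemma card_UNIV_3_third_element:
  assumes "card (UNIV :: 'a set) = 3" and "a \<noteq> b"
  obtains c :: 'a where "UNIV = {a, b, c}" and "c \<notin> {a, b}"
proof -
  have "finite (UNIV :: 'a set)"
    using assms(1) card.infinite by fastforce
  have "card {a, b} \<noteq> card (UNIV :: 'a set)"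
    using assms by simp
  then have "{a, b} \<noteq> UNIV" by auto
  then obtain c where c: "c \<notin> {a, b}" by blast
  with assms \<open>finite UNIV\<close> have "UNIV = {a, b, c}"
    by (intro card_subset_eq[symmetric]) auto
  from this c show thesis by (rule that)
qed

lemma inf_square_free_no_interleaved_letter:
  assumes free: "inf_square_free w" and "\<forall>k<4. w (2 * k) = c \<and> w (2 * k + 1) \<in> {a, b}"
  shows False
proof -
  have c: "w 0 = c" "w 2 = c" "w 4 = c" "w 6 = c"
    and ab: "w 1 \<in> {a, b}" "w 3 \<in> {a, b}" "w 5 \<in> {a, b}" "w 7 \<in> {a, b}"
    using assms(2)[rule_format, of 0] assms(2)[rule_format, of 1]
      assms(2)[rule_format, of 2] assms(2)[rule_format, of 3] by simp_all
  have period_2: "\<exists>k<2. w (m + k) \<noteq> w (m + 2 + k)" for m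
    using inf_square_freeD[OF free, of 2 m] by simp
  have "w 1 \<noteq> w 3" "w 3 \<noteq> w 5" "w 5 \<noteq> w 7"
    using period_2[of 0] period_2[of 2] period_2[of 4] c by (auto simp: less_Suc_eq numeral_eq_Suc)
  with ab have "w 5 = w 1" "w 7 = w 3" by auto
  moreover obtain k where "k < 4" "w k \<noteq> w (4 + k)"
    using inf_square_freeD[OF free, of 4 0] by auto
  ultimately show False
    using c by (auto simp: less_Suc_eq numeral_eq_Suc)
qed

lemma inf_pseudo_square_free_adjacent:
  assumes "inf_pseudo_square_free \<theta> w"
  shows "w n \<noteq> w (Suc n)" and "[w n] \<noteq> \<theta> [w (Suc n)]"
proof -
  have "inf_factor w ([w n] @ [w (Suc n)])"
    using inf_factor_map_upt[of w n "Suc (Suc n)"] by simp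
  with assms have "\<not> pseudo_square \<theta> ([w n] @ [w (Suc n)])"
    unfolding inf_pseudo_square_free_def by blast
  then show "w n \<noteq> w (Suc n)" and "[w n] \<noteq> \<theta> [w (Suc n)]"
    unfolding pseudo_square_def by blast+
qed

lemma not_inf_pseudo_square_free_card_3:
  assumes "card (UNIV :: 'a set) = 3" and "antimorphic_involution \<theta>" and "\<theta> \<noteq> rev"
  shows "\<not> inf_pseudo_square_free \<theta> (w :: nat \<Rightarrow> 'a)"
proof
  assume free: "inf_pseudo_square_free \<theta> w"
  obtain \<sigma> where \<theta>: "\<And>xs. \<theta> xs = rev (map \<sigma> xs)" and inv: "\<And>a. \<sigma> (\<sigma> a) = a"
    using antimorphic_involution_rev_map[OF assms(2)] by blast
  have "\<exists>a. \<sigma> a \<noteq> a"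
  proof (rule ccontr)
    assume "\<nexists>a. \<sigma> a \<noteq> a"
    then have "\<theta> = rev" by (intro ext) (simp add: \<theta> map_idI)
    with assms(3) show False ..
  qed
  then obtain a where "\<sigma> a \<noteq> a" by blast
  then obtain c where univ: "UNIV = {a, \<sigma> a, c}" and "c \<notin> {a, \<sigma> a}"
    using card_UNIV_3_third_element[OF assms(1)] by metis
  have adjacent: "w n \<noteq> w (Suc n)" "w n \<noteq> \<sigma> (w (Suc n))" for n
    using inf_pseudo_square_free_adjacent[OF free, of n] by (simp_all add: \<theta>)
  have not_c: "w n \<in> {a, \<sigma> a}" if "w n \<noteq> c" for n
    using univ that by blast
  have one_is_c: "w n = c \<or> w (Suc n) = c" for n
  proof (rule ccontr)
    assume "\<not> (w n = c \<or> w (Suc n) = c)"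
    with not_c have "w n \<in> {a, \<sigma> a}" "w (Suc n) \<in> {a, \<sigma> a}" by auto
    with adjacent[of n] inv show False by auto
  qed
  obtain i where "w i = c" using one_is_c[of 0] by blast
  have interleaved: "w (i + 2 * k) = c \<and> w (i + 2 * k + 1) \<in> {a, \<sigma> a}" for k
  proof (induction k)
    case 0
    with \<open>w i = c\<close> show ?case using adjacent(1)[of i] not_c by simp
  next
    case (Suc k)
    with \<open>c \<notin> {a, \<sigma> a}\<close> have "w (Suc (i + 2 * k)) \<noteq> c" by auto
    with one_is_c have "w (Suc (Suc (i + 2 * k))) = c" by blast
    moreover from this have "w (Suc (Suc (Suc (i + 2 * k)))) \<in> {a, \<sigma> a}"
      using adjacent(1) not_c by metis
    ultimately show ?case by simp
  qed
  have "inf_square_free (\<lambda>n. w (i + n))"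
    using inf_pseudo_square_free_imp_square_free[OF free] by (rule inf_square_free_shift)
  moreover have "\<forall>k<4. w (i + 2 * k) = c \<and> w (i + (2 * k + 1)) \<in> {a, \<sigma> a}"
    using interleaved by (simp add: add.assoc)
  ultimately show False
    by (rule inf_square_free_no_interleaved_letter)
qed

theorem mainTheorem9:
  assumes "card (UNIV :: 'a set) = 3"
  shows "(\<exists>w :: nat \<Rightarrow> 'a. inf_pseudo_square_free rev w) \<and>
         (\<forall>\<theta> :: 'a list \<Rightarrow> 'a list. antimorphic_involution \<theta> \<and> \<theta> \<noteq> rev \<longrightarrow>
            \<not> (\<exists>w :: nat \<Rightarrow> 'a. inf_pseudo_square_free \<theta> w))"
proof
  from assms obtain a b c :: 'a where "a \<noteq> b" "b \<noteq> c" "a \<noteq> c"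
    unfolding card_3_iff by auto
  define f :: "bool option \<Rightarrow> 'a" where "f = case_option a (\<lambda>t. if t then b else c)"
  have "inj f"
    unfolding f_def inj_def using \<open>a \<noteq> b\<close> \<open>b \<noteq> c\<close> \<open>a \<noteq> c\<close> by (auto split: option.splits)
  then have "inf_pseudo_square_free rev (f \<circ> tm_diff)"
    by (simp add: inf_pseudo_square_free_rev_iff inf_square_free_comp inf_square_free_tm_diff)
  then show "\<exists>w :: nat \<Rightarrow> 'a. inf_pseudo_square_free rev w" by blast
next
  show "\<forall>\<theta> :: 'a list \<Rightarrow> 'a list. antimorphic_involution \<theta> \<and> \<theta> \<noteq> rev \<longrightarrow>
          \<not> (\<exists>w :: nat \<Rightarrow> 'a. inf_pseudo_square_free \<theta> w)"
    using not_inf_pseudo_square_free_card_3[OF assms] by blast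
qed

end
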